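(* Assume Assumption 1 (stated in the context). Let $\theta^0$, $D^3_\theta$ and $\epsilon_9>0$ be as in the context. Then there is a positive constant $\epsilon_{12}$ such that for every triple $(i,j,k)$ and every $t\in[0,T]$ one of the following holds: $$\text{dist}(b_{ij}(t,\theta^0),o_k)-d_0>\epsilon_{12},$$ or $$\text{dist}(b_{ij}(t,\theta^0),o_k)-d_0\le\epsilon_{12}\ \text{ and }\ \langle D^3_\theta,\nabla_\theta\text{dist}(b_{ij}(t,\theta^0),o_k)\rangle\ge\frac{\epsilon_9}{2}.$$
   Context: For a finite-dimensional parameter vector $\theta$ and $t\in[0,T]$, robot pieces $b_{ij}(t,\theta)\subset\mathbb{R}^3$ and obstacle pieces $o_k\subset\mathbb{R}^3$ are given; $\text{dist}$ is the shortest Euclidean distance between sets; $d_0\ge0$; $\mathcal{O}(\theta)$ is a differentiable cost. Assumption 1: the index set of triples $(i,j,k)$ is finite and each $(t,\theta)\mapsto\text{dist}(b_{ij}(t,\theta),o_k)$ is sufficiently smooth. $\theta^0$ is a parameter vector, and $D^3_\theta$ is a direction with positive constants $\epsilon_8,\epsilon_9$ such that $\langle D^3_\theta,\nabla_\theta\mathcal{O}(\theta^0)\rangle<-\epsilon_8$ and $\langle D^3_\theta,\nabla_\theta\text{dist}(b_{ij}(t,\theta^0),o_k)\rangle>\epsilon_9$ for all $(i,j,k,t)$ with $\text{dist}(b_{ij}(t,\theta^0),o_k)=d_0$. (Such a direction exists when the generalized Mangasarian–Fromovitz constraint qualification holds at $\theta^0$ and the first-order optimality condition fails there.) *)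

theory Defs
  imports "HOL-Analysis.Analysis"
begin

definition grad :: "('a::euclidean_space \<Rightarrow> real) \<Rightarrow> 'a \<Rightarrow> 'a" where
  "grad f x = (THE v. (f has_derivative (\<lambda>h. v \<bullet> h)) (at x))"

end

theory Submission
  imports Defs
begin

text \<open>On the compact set of times, the margin \<open>max (dist - d0) (D \<bullet> grad dist - \<epsilon>9/2)\<close>
  is continuous and positive (at an active time the second term is positive), so it has a
  positive minimum \<open>m\<close>. Any time whose distance lies within \<open>m\<close> of \<open>d0\<close> must then have
  directional derivative at least \<open>\<epsilon>9/2\<close>. Finitely many triples give finitely many
  thresholds, and their minimum is \<open>\<epsilon>12\<close>.\<close>

lemma compact_continuous_pos_lower_bound:
  fixes \<phi> :: "'a::topological_space \<Rightarrow> real"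
  assumes "compact S" "continuous_on S \<phi>" "\<forall>x\<in>S. 0 < \<phi> x"
  shows "\<exists>m>0. \<forall>x\<in>S. m \<le> \<phi> x"
proof (cases "S = {}")
  case False
  then obtain x0 where "x0 \<in> S" "\<forall>x\<in>S. \<phi> x0 \<le> \<phi> x"
    using continuous_attains_inf[OF assms(1) _ assms(2)] by blast
  then show ?thesis
    using assms(3) by blast
qed (auto intro: exI[of _ 1])

lemma eventually_at_right_bound_near_zeros:
  fixes h g :: "'a::topological_space \<Rightarrow> real"
  assumes S: "compact S" and h: "continuous_on S h" and g: "continuous_on S g"
    and nonneg: "\<forall>t\<in>S. 0 \<le> h t"
    and zeros: "\<forall>t\<in>S. h t = 0 \<longrightarrow> c < g t"
  shows "\<forall>\<^sub>F e in at_right 0. \<forall>t\<in>S. h t \<le> e \<longrightarrow> c \<le> g t"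
proof -
  have "continuous_on S (\<lambda>t. max (h t) (g t - c))"
    by (intro continuous_intros h g)
  moreover have "\<forall>t\<in>S. 0 < max (h t) (g t - c)"
    using nonneg zeros by force
  ultimately obtain m where m: "m > 0" "\<forall>t\<in>S. m \<le> max (h t) (g t - c)"
    using compact_continuous_pos_lower_bound[OF S] by blast
  have "\<forall>t\<in>S. h t \<le> e \<longrightarrow> c \<le> g t" if "e < m" for e
    using m that by force
  then show ?thesis
    unfolding eventually_at_right_field using m(1) by blast
qed

lemma continuous_on_slice:
  assumes "continuous_on (A \<times> UNIV) (\<lambda>(t, \<theta>). F t \<theta>)"
  shows "continuous_on A (\<lambda>t. F t \<theta>0)"
  using continuous_on_compose2[OF assms continuous_on_Pair[OF continuous_on_id continuous_on_const]]
  by auto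

theorem lemma9:
  fixes b :: "'i \<Rightarrow> 'j \<Rightarrow> real \<Rightarrow> 'p::euclidean_space \<Rightarrow> (real^3) set"
    and obs :: "'k \<Rightarrow> (real^3) set"
    and I :: "('i \<times> 'j \<times> 'k) set"
    and T d0 \<epsilon>8 \<epsilon>9 :: real
    and \<O> :: "'p \<Rightarrow> real"
    and \<theta>0 D :: 'p
  assumes finI: "finite I"
    and d0: "d0 \<ge> 0"
    and cont: "\<forall>(i,j,k)\<in>I. continuous_on ({0..T} \<times> UNIV)
                 (\<lambda>(t,\<theta>). setdist (b i j t \<theta>) (obs k))"
    and diff: "\<forall>(i,j,k)\<in>I. \<forall>t\<in>{0..T}. \<forall>\<theta>.
                 (\<lambda>\<theta>'. setdist (b i j t \<theta>') (obs k)) differentiable (at \<theta>)"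
    and grad_cont: "\<forall>(i,j,k)\<in>I. continuous_on ({0..T} \<times> UNIV)
                 (\<lambda>(t,\<theta>). grad (\<lambda>\<theta>'. setdist (b i j t \<theta>') (obs k)) \<theta>)"
    and O_diff: "\<O> differentiable (at \<theta>0)"
    and feas: "\<forall>(i,j,k)\<in>I. \<forall>t\<in>{0..T}. setdist (b i j t \<theta>0) (obs k) \<ge> d0"
    and e8: "\<epsilon>8 > 0" and e9: "\<epsilon>9 > 0"
    and descent: "D \<bullet> grad \<O> \<theta>0 < - \<epsilon>8"
    and mfcq: "\<forall>(i,j,k)\<in>I. \<forall>t\<in>{0..T}. setdist (b i j t \<theta>0) (obs k) = d0 \<longrightarrow>
                 D \<bullet> grad (\<lambda>\<theta>. setdist (b i j t \<theta>) (obs k)) \<theta>0 > \<epsilon>9"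
  shows "\<exists>\<epsilon>12>0. \<forall>(i,j,k)\<in>I. \<forall>t\<in>{0..T}.
           setdist (b i j t \<theta>0) (obs k) - d0 > \<epsilon>12 \<or>
           (setdist (b i j t \<theta>0) (obs k) - d0 \<le> \<epsilon>12 \<and>
            D \<bullet> grad (\<lambda>\<theta>. setdist (b i j t \<theta>) (obs k)) \<theta>0 \<ge> \<epsilon>9 / 2)"
proof -
  let ?dist = "\<lambda>i j k t. setdist (b i j t \<theta>0) (obs k)"
  let ?slope = "\<lambda>i j k t. D \<bullet> grad (\<lambda>\<theta>. setdist (b i j t \<theta>) (obs k)) \<theta>0"
  have near_active: "\<forall>\<^sub>F e in at_right 0.
          \<forall>t\<in>{0..T}. ?dist i j k t - d0 \<le> e \<longrightarrow> \<epsilon>9 / 2 \<le> ?slope i j k t"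
    if ijk: "(i, j, k) \<in> I" for i j k
  proof (rule eventually_at_right_bound_near_zeros)
    show "continuous_on {0..T} (\<lambda>t. ?dist i j k t - d0)"
      using continuous_on_slice[of _ "\<lambda>t \<theta>. setdist (b i j t \<theta>) (obs k)"] cont ijk
      by (fastforce intro: continuous_intros)
    show "continuous_on {0..T} (?slope i j k)"
      using continuous_on_slice[of _ "\<lambda>t \<theta>. grad (\<lambda>\<theta>'. setdist (b i j t \<theta>') (obs k)) \<theta>"]
        grad_cont ijk by (fastforce intro: continuous_intros)
  next
    show "\<forall>t\<in>{0..T}. 0 \<le> ?dist i j k t - d0"
      using feas ijk by fastforce
    show "\<forall>t\<in>{0..T}. ?dist i j k t - d0 = 0 \<longrightarrow> \<epsilon>9 / 2 < ?slope i j k t"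
      using mfcq ijk e9 by fastforce
  qed simp
  have "\<forall>\<^sub>F e in at_right 0. \<forall>(i,j,k)\<in>I.
          \<forall>t\<in>{0..T}. ?dist i j k t - d0 \<le> e \<longrightarrow> \<epsilon>9 / 2 \<le> ?slope i j k t"
    using near_active by (intro eventually_ball_finite[OF finI]) (simp add: split_paired_all)
  then obtain e where "0 < e" "\<forall>(i,j,k)\<in>I.
          \<forall>t\<in>{0..T}. ?dist i j k t - d0 \<le> e \<longrightarrow> \<epsilon>9 / 2 \<le> ?slope i j k t"
    using eventually_happens'[OF trivial_limit_at_right_real eventually_conj[OF eventually_at_right_less]]
    by blast
  then show ?thesis
    by (intro exI[of _ e]) (auto simp: not_less)
qed

end
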